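(* Let $0<\rho\le 1/2$, $0<s\le1$, and let $A=2/(\rho s)$. For every twist system with parameter $\rho$ on $n\ge2$ points, its $s$-energy satisfies $$\mathcal{E}(s)\le \sum_{1\le i<j\le n}A^{\,j-i}.$$ In particular $\mathcal{E}(s)\le 2/(\rho s)$ if $n=2$, and $\mathcal{E}(s)< 2\,(2/(\rho s))^{n-1}$ if $n>2$.
   Context: A twist system with parameter $\rho\in(0,1/2]$ on $n$ points is a sequence of configurations $x^{(t)}=(x_1\le x_2\le\dots\le x_n)\in[0,1]^n$, $t\ge1$, such that each transition from $x=x^{(t)}$ to $y=x^{(t+1)}$ is as follows: some integers $1\le u<v\le n$ are chosen (depending on $t$), and for $u\le i\le v$ the twist of $x_i$ is the interval $$\tau_i=\bigl[x_u+\rho(x_{\min\{i+1,v\}}-x_u),\; x_v-\rho(x_v-x_{\max\{i-1,u\}})\bigr];$$ the new configuration must satisfy (i) $y_1\le\dots\le y_n$, and (ii) $y_i\in\tau_i$ for $u\le i\le v$ and $y_i=x_i$ otherwise. The choices of $u,v$ and of the $y_i$ are otherwise arbitrary. The $s$-energy of the twist system is $\mathcal{E}(s)=\sum_{t\ge1}(x_v-x_u)^s$, where $u,v$ are those chosen at step $t$ and $x=x^{(t)}$. *)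

theory Defs
  imports Complex_Main
begin

text \<open>A configuration on n points is a function x :: nat \<Rightarrow> real, of which only
  the values x 1, ..., x n are relevant; it must be sorted and lie in [0,1].\<close>
definition config :: "nat \<Rightarrow> (nat \<Rightarrow> real) \<Rightarrow> bool" where
  "config n x \<longleftrightarrow> (\<forall>i\<in>{1..n}. 0 \<le> x i \<and> x i \<le> 1) \<and>
                   (\<forall>i j. 1 \<le> i \<longrightarrow> i \<le> j \<longrightarrow> j \<le> n \<longrightarrow> x i \<le> x j)"

definition twist :: "real \<Rightarrow> (nat \<Rightarrow> real) \<Rightarrow> nat \<Rightarrow> nat \<Rightarrow> nat \<Rightarrow> real set" where
  "twist \<rho> x u v i = {x u + \<rho> * (x (min (i + 1) v) - x u) .. x v - \<rho> * (x v - x (max (i - 1) u))}"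

definition twist_step :: "real \<Rightarrow> nat \<Rightarrow> (nat \<Rightarrow> real) \<Rightarrow> (nat \<Rightarrow> real) \<Rightarrow> nat \<Rightarrow> nat \<Rightarrow> bool" where
  "twist_step \<rho> n x y u v \<longleftrightarrow> 1 \<le> u \<and> u < v \<and> v \<le> n \<and> config n y \<and>
     (\<forall>i. u \<le> i \<and> i \<le> v \<longrightarrow> y i \<in> twist \<rho> x u v i) \<and>
     (\<forall>i\<in>{1..n}. (i < u \<or> v < i) \<longrightarrow> y i = x i)"

text \<open>A twist system: configurations x t (t = 0,1,2,... corresponds to t = 1,2,3,...
  in the paper) with the chosen pairs (u t, v t) at each step.\<close>
definition twist_system :: "real \<Rightarrow> nat \<Rightarrow> (nat \<Rightarrow> nat \<Rightarrow> real) \<Rightarrow> (nat \<Rightarrow> nat) \<Rightarrow> (nat \<Rightarrow> nat) \<Rightarrow> bool" where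
  "twist_system \<rho> n x u v \<longleftrightarrow> (\<forall>t. config n (x t)) \<and>
     (\<forall>t. twist_step \<rho> n (x t) (x (Suc t)) (u t) (v t))"

definition energy_term :: "real \<Rightarrow> (nat \<Rightarrow> nat \<Rightarrow> real) \<Rightarrow> (nat \<Rightarrow> nat) \<Rightarrow> (nat \<Rightarrow> nat) \<Rightarrow> nat \<Rightarrow> real" where
  "energy_term s x u v t = (x t (v t) - x t (u t)) powr s"

end

theory Submission
  imports Defs "HOL-Analysis.Convex"
begin

text \<open>With \<open>A = 2/(\<rho>s)\<close>, consider the potential of a configuration, the sum over pairs
  \<open>i < j\<close> of \<open>A^(j-i) (x j - x i)^s\<close>; it lies between \<open>0\<close> and the sum of the weights \<open>A^(j-i)\<close>.
  By concavity of \<open>t \<mapsto> t^s\<close> the change of each gap is bounded below by a linear expression in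
  the displacements, and a twist step on \<open>[u, v]\<close> lowers the potential by at least
  \<open>(x v - x u)^s\<close>: the pairs inside \<open>[u, v]\<close> pay for it, while for the pairs with one endpoint
  outside the linear bounds telescope to something nonnegative, because \<open>\<rho>s A^(k+1) = 2 A^k\<close>.
  Summing over all steps bounds the energy by the initial potential.\<close>

lemma powr_le_tangent_line:
  fixes s a t :: real
  assumes "0 < s" "s \<le> 1" "0 < a" "0 \<le> t" "t \<le> a"
  shows "(a - t) powr s \<le> a powr (s - 1) * (a - s * t)"
proof (cases "t = a")
  case True
  then show ?thesis using assms by (simp add: mult_left_le_one_le)
next
  case False
  then have "0 < a - t" using assms by simp
  then have "(a - t) powr s * a powr (1 - s) \<le> s * (a - t) + (1 - s) * a"
    using Youngs_inequality_0[of s "1 - s" "a - t" a] assms by simp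
  also have "\<dots> = a - s * t" by (simp add: algebra_simps)
  finally have young: "(a - t) powr s * a powr (1 - s) \<le> a - s * t" .
  have "a powr (1 - s) * a powr (s - 1) = 1"
    using assms by (simp add: powr_add [symmetric])
  then have "(a - t) powr s = (a - t) powr s * a powr (1 - s) * a powr (s - 1)"
    by (simp add: mult.assoc)
  also have "\<dots> \<le> (a - s * t) * a powr (s - 1)"
    using young by (intro mult_right_mono) auto
  finally show ?thesis by (simp add: mult.commute)
qed

lemma powr_ge_chord:
  fixes s a g :: real
  assumes "0 < s" "s \<le> 1" "0 < a" "0 \<le> g" "g \<le> a"
  shows "a powr (s - 1) * (a - g) \<le> (a - g) powr s"
proof (cases "g = a")
  case True
  then show ?thesis by simp
next
  case False
  then have pos: "0 < a - g" using assms by simp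
  then have "a powr (s - 1) * (a - g) \<le> (a - g) powr (s - 1) * (a - g) powr 1"
    using powr_mono2'[of "s - 1" "a - g" a] assms by (simp add: mult_right_mono)
  also have "\<dots> = (a - g) powr s" by (subst powr_add [symmetric]) simp
  finally show ?thesis .
qed

text \<open>The concavity estimate behind the potential argument: shortening a gap of length
  \<open>a - g\<close> to at most \<open>a - t\<close> gains, in \<open>s\<close>-th powers, at least the linearisation at \<open>a\<close>.\<close>
lemma powr_diff_ge_linear:
  fixes s a g t b :: real
  assumes "0 < s" "s \<le> 1" "0 \<le> g" "g \<le> a" "0 \<le> t" "t \<le> a" "0 \<le> b" "b \<le> a - t"
  shows "a powr (s - 1) * (s * t - g) \<le> (a - g) powr s - b powr s"
proof (cases "a = 0")
  case True
  then show ?thesis using assms by simp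
next
  case False
  then have a: "0 < a" using assms by simp
  have "b powr s \<le> (a - t) powr s" using assms by (intro powr_mono2) auto
  also have "\<dots> \<le> a powr (s - 1) * (a - s * t)"
    using powr_le_tangent_line assms a by blast
  finally have "b powr s \<le> a powr (s - 1) * (a - s * t)" .
  moreover have "a powr (s - 1) * (a - g) \<le> (a - g) powr s"
    using powr_ge_chord assms a by blast
  ultimately show ?thesis by (simp add: algebra_simps)
qed

lemma doubling_weighted_telescope_ge:
  fixes e g :: "nat \<Rightarrow> real" and c :: real
  assumes "m \<le> k"
    and doubling: "\<And>j. m \<le> j \<Longrightarrow> j < k \<Longrightarrow> c * e (Suc j) = 2 * e j"
    and nonneg: "\<And>j. m \<le> j \<Longrightarrow> j \<le> k \<Longrightarrow> 0 \<le> e j * g j"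
  shows "e m * g m - e k * g k \<le> (\<Sum>j\<in>{Suc m..k}. e j * (c * g (j - 1) - g j))"
  using assms
proof (induction k rule: dec_induct)
  case base
  then show ?case by simp
next
  case (step k)
  have "e (Suc k) * (c * g k - g (Suc k)) = 2 * e k * g k - e (Suc k) * g (Suc k)"
    using step.prems(1)[of k] step.hyps by (simp add: algebra_simps)
  moreover have "0 \<le> e k * g k" using step.prems(2)[of k] step.hyps by simp
  moreover have "e m * g m - e k * g k \<le> (\<Sum>j\<in>{Suc m..k}. e j * (c * g (j - 1) - g j))"
    using step by auto
  ultimately show ?case using step.hyps by (simp add: sum.cl_ivl_Suc)
qed

lemma weighted_increment_sum_ge:
  fixes W Q :: "nat \<Rightarrow> real" and c :: real
  assumes "m \<le> k"
    and recurrence: "\<And>i. m \<le> i \<Longrightarrow> i < k \<Longrightarrow> 1 + W (Suc i) \<le> c * W i"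
    and nonneg: "\<And>i. m \<le> i \<Longrightarrow> i \<le> k \<Longrightarrow> 0 \<le> Q i"
  shows "(\<Sum>i\<in>{m..<k}. Q (Suc i)) + W k * Q k - W m * Q m
           \<le> (\<Sum>i\<in>{m..<k}. W i * (c * Q (Suc i) - Q i))"
  using assms
proof (induction k rule: dec_induct)
  case base
  then show ?case by simp
next
  case (step k)
  have "(1 + W (Suc k)) * Q (Suc k) \<le> c * W k * Q (Suc k)"
    using step.prems(1)[of k] step.prems(2)[of "Suc k"] step.hyps by (intro mult_right_mono) auto
  then show ?case using step by (simp add: algebra_simps)
qed

text \<open>Points \<open>0, \<dots>, m\<close> at distances \<open>a k\<close> from a fixed anchor, the farthest being \<open>m\<close>,
  move to distances \<open>b k\<close> under the twist constraint. At \<open>k = 0\<close> the truncated \<open>k - 1\<close> is \<open>0\<close>,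
  which matches the clipping by \<open>min\<close>/\<open>max\<close> in the twist interval.\<close>
lemma anchored_gain_sum_nonneg:
  fixes a b :: "nat \<Rightarrow> real"
  assumes "0 < \<rho>" "\<rho> \<le> 1" "0 < s" "s \<le> 1" "\<rho> * s * A = 2"
    and a: "\<And>k. k \<le> m \<Longrightarrow> 0 \<le> a k \<and> a k \<le> a m"
    and b: "\<And>k. k \<le> m \<Longrightarrow> 0 \<le> b k \<and> b k \<le> a m - \<rho> * (a m - a (k - 1))"
  shows "0 \<le> (\<Sum>k\<le>m. A ^ k * (a k powr s - b k powr s))"
proof -
  define c where "c = \<rho> * s"
  define g where "g k = a m - a k" for k
  have c: "0 < c" "c * A = 2" using assms unfolding c_def by simp_all
  then have "A = 2 / c" by (simp add: field_simps)
  then have A: "0 < A" using c by simp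
  have gain: "a m powr (s - 1) * (A ^ k * (c * g (k - 1) - g k)) \<le> A ^ k * (a k powr s - b k powr s)"
    if k: "k \<le> m" for k
  proof -
    have "0 \<le> g (k - 1)" "g (k - 1) \<le> a m" using a[of "k - 1"] a[of m] k unfolding g_def by auto
    then have "0 \<le> \<rho> * g (k - 1)" "\<rho> * g (k - 1) \<le> a m"
      using assms(1,2) mult_left_le_one_le[of "g (k - 1)" \<rho>] by auto
    then have "a m powr (s - 1) * (s * (\<rho> * g (k - 1)) - g k) \<le> (a m - g k) powr s - b k powr s"
      using a[of k] b[of k] k assms(3,4) unfolding g_def
      by (intro powr_diff_ge_linear) auto
    then have "A ^ k * (a m powr (s - 1) * (c * g (k - 1) - g k)) \<le> A ^ k * (a k powr s - b k powr s)"
      using A unfolding c_def g_def by (intro mult_left_mono) (auto simp: algebra_simps)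
    then show ?thesis by (simp add: algebra_simps)
  qed
  have "A ^ 0 * g 0 - A ^ m * g m \<le> (\<Sum>k\<in>{Suc 0..m}. A ^ k * (c * g (k - 1) - g k))"
    using a A c by (intro doubling_weighted_telescope_ge) (auto simp: g_def mult.assoc [symmetric])
  moreover have "(\<Sum>k\<le>m. A ^ k * (c * g (k - 1) - g k))
      = (c - 1) * g 0 + (\<Sum>k\<in>{Suc 0..m}. A ^ k * (c * g (k - 1) - g k))"
    by (simp add: atMost_atLeast0 sum.atLeast_Suc_atMost algebra_simps)
  moreover have "0 \<le> g 0" "g m = 0" using a[of 0] unfolding g_def by auto
  ultimately have "c * g 0 \<le> (\<Sum>k\<le>m. A ^ k * (c * g (k - 1) - g k))"
    by (simp add: algebra_simps)
  moreover have "0 \<le> c * g 0" using c \<open>0 \<le> g 0\<close> by simp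
  ultimately have "0 \<le> (\<Sum>k\<le>m. A ^ k * (c * g (k - 1) - g k))" by linarith
  then have "0 \<le> a m powr (s - 1) * (\<Sum>k\<le>m. A ^ k * (c * g (k - 1) - g k))" by simp
  also have "\<dots> \<le> (\<Sum>k\<le>m. A ^ k * (a k powr s - b k powr s))"
    unfolding sum_distrib_left by (intro sum_mono gain) simp
  finally show ?thesis .
qed

lemma power_tail_sum_unfold:
  fixes A :: real
  assumes "i < v"
  shows "(\<Sum>j\<in>{i<..v}. A ^ (j - i)) = A + A * (\<Sum>j\<in>{Suc i<..v}. A ^ (j - Suc i))"
proof -
  have "{i<..v} = insert (Suc i) {Suc i<..v}" using assms by auto
  moreover have "A ^ (j - i) = A * A ^ (j - Suc i)" if "j \<in> {Suc i<..v}" for j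
    using that by (simp add: Suc_diff_Suc [symmetric])
  ultimately show ?thesis by (simp add: sum_distrib_left)
qed

definition pair_potential :: "real \<Rightarrow> real \<Rightarrow> nat \<Rightarrow> (nat \<Rightarrow> real) \<Rightarrow> real" where
  "pair_potential A s n z = (\<Sum>i\<in>{1..n}. \<Sum>j\<in>{i<..n}. A ^ (j - i) * (z j - z i) powr s)"

locale twist_transition =
  fixes \<rho> s A :: real and n u v :: nat and x y :: "nat \<Rightarrow> real"
  assumes rho_pos: "0 < \<rho>" and rho_le: "\<rho> \<le> 1/2" and s_pos: "0 < s" and s_le: "s \<le> 1"
    and weight: "\<rho> * s * A = 2"
    and config_x: "config n x" and step: "twist_step \<rho> n x y u v"
begin

definition gain :: "nat \<Rightarrow> nat \<Rightarrow> real" where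
  "gain i j = A ^ (j - i) * ((x j - x i) powr s - (y j - y i) powr s)"

lemma A_pos: "0 < A"
proof -
  have "A = 2 / (\<rho> * s)" using weight rho_pos s_pos by (simp add: field_simps)
  then show ?thesis using rho_pos s_pos by simp
qed

lemma pair_range: "1 \<le> u" "u < v" "v \<le> n"
  using step unfolding twist_step_def by auto

lemma x_mono: "1 \<le> i \<Longrightarrow> i \<le> j \<Longrightarrow> j \<le> n \<Longrightarrow> x i \<le> x j"
  using config_x unfolding config_def by auto

lemma y_mono: "1 \<le> i \<Longrightarrow> i \<le> j \<Longrightarrow> j \<le> n \<Longrightarrow> y i \<le> y j"
  using step unfolding twist_step_def config_def by auto

lemma y_lower: "u \<le> i \<Longrightarrow> i \<le> v \<Longrightarrow> x u + \<rho> * (x (min (i + 1) v) - x u) \<le> y i"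
  using step unfolding twist_step_def twist_def by auto

lemma y_upper: "u \<le> i \<Longrightarrow> i \<le> v \<Longrightarrow> y i \<le> x v - \<rho> * (x v - x (max (i - 1) u))"
  using step unfolding twist_step_def twist_def by auto

lemma y_fixed: "1 \<le> i \<Longrightarrow> i \<le> n \<Longrightarrow> i < u \<or> v < i \<Longrightarrow> y i = x i"
  using step unfolding twist_step_def by auto

lemma gain_fixed_pair:
  "1 \<le> i \<Longrightarrow> i \<le> n \<Longrightarrow> 1 \<le> j \<Longrightarrow> j \<le> n \<Longrightarrow> i < u \<or> v < i \<Longrightarrow> j < u \<or> v < j
     \<Longrightarrow> gain i j = 0"
  unfolding gain_def using y_fixed by simp

lemma gain_left_nonneg:
  assumes i: "1 \<le> i" "i < u"
  shows "0 \<le> (\<Sum>j\<in>{u..v}. gain i j)"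
proof -
  note uv = pair_range
  have a: "0 \<le> x (u + k) - x i \<and> x (u + k) - x i \<le> x (u + (v - u)) - x i" if "k \<le> v - u" for k
    using that i uv x_mono[of i "u + k"] x_mono[of "u + k" v] by auto
  have "max (u + k - 1) u = u + (k - 1)" for k by auto
  then have b: "0 \<le> y (u + k) - x i \<and>
      y (u + k) - x i \<le> x (u + (v - u)) - x i - \<rho> * (x (u + (v - u)) - x i - (x (u + (k - 1)) - x i))"
    if "k \<le> v - u" for k
    using that i uv y_mono[of i "u + k"] y_fixed[of i] y_upper[of "u + k"] by auto
  have "0 \<le> (\<Sum>k\<le>v - u. A ^ k * ((x (u + k) - x i) powr s - (y (u + k) - x i) powr s))"
    using anchored_gain_sum_nonneg[where a="\<lambda>k. x (u + k) - x i" and b="\<lambda>k. y (u + k) - x i"]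
      rho_pos rho_le s_pos s_le weight a b by simp
  then have "0 \<le> A ^ (u - i) * (\<Sum>k\<le>v - u. A ^ k * ((x (u + k) - x i) powr s - (y (u + k) - x i) powr s))"
    using A_pos by simp
  also have "\<dots> = (\<Sum>j\<in>{u..v}. gain i j)"
  proof -
    have "A ^ (u + k - i) = A ^ (u - i) * A ^ k" for k
      using i by (simp add: power_add [symmetric])
    then show ?thesis
      using i uv y_fixed[of i]
      by (simp add: sum.atLeastAtMost_shift_0[of u v] atLeast0AtMost sum_distrib_left gain_def mult.assoc)
  qed
  finally show ?thesis .
qed

lemma gain_right_nonneg:
  assumes j: "v < j" "j \<le> n"
  shows "0 \<le> (\<Sum>i\<in>{u..v}. gain i j)"
proof -
  note uv = pair_range
  have a: "0 \<le> x j - x (v - k) \<and> x j - x (v - k) \<le> x j - x (v - (v - u))" if "k \<le> v - u" for k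
    using that j uv x_mono[of "v - k" j] x_mono[of u "v - k"] by auto
  have b: "0 \<le> x j - y (v - k) \<and>
      x j - y (v - k) \<le> x j - x (v - (v - u)) - \<rho> * (x j - x (v - (v - u)) - (x j - x (v - (k - 1))))"
    if "k \<le> v - u" for k
  proof -
    have "u \<le> v - k" "v - k \<le> j" "min (v - k + 1) v = v - (k - 1)" using that uv j by auto
    then show ?thesis
      using that j uv y_mono[of "v - k" j] y_fixed[of j] y_lower[of "v - k"] by auto
  qed
  have "0 \<le> (\<Sum>k\<le>v - u. A ^ k * ((x j - x (v - k)) powr s - (x j - y (v - k)) powr s))"
    using anchored_gain_sum_nonneg[where a="\<lambda>k. x j - x (v - k)" and b="\<lambda>k. x j - y (v - k)"]
      rho_pos rho_le s_pos s_le weight a b by simp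
  then have "0 \<le> A ^ (j - v) * (\<Sum>k\<le>v - u. A ^ k * ((x j - x (v - k)) powr s - (x j - y (v - k)) powr s))"
    using A_pos by simp
  also have "\<dots> = (\<Sum>k\<le>v - u. gain (v - k) j)"
  proof -
    have "A ^ (j - (v - k)) = A ^ (j - v) * A ^ k" if "k \<le> v" for k
      using that j by (simp add: power_add [symmetric])
    then show ?thesis
      using j uv y_fixed[of j] by (simp add: sum_distrib_left gain_def mult.assoc)
  qed
  also have "\<dots> = (\<Sum>i\<in>{u..v}. gain i j)"
    by (rule sum.reindex_bij_witness[where i="\<lambda>i. v - i" and j="\<lambda>k. v - k"]) (use uv in auto)
  finally show ?thesis .
qed

lemma gain_inner_pair_ge:
  assumes ij: "u \<le> i" "i < j" "j \<le> v"
  shows "(x v - x u) powr (s - 1) * (A ^ (j - i) *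
           ((\<rho> * s * (x (Suc i) - x u) - (x i - x u)) + (\<rho> * s * (x v - x (j - 1)) - (x v - x j))))
         \<le> gain i j"
proof -
  note uv = pair_range
  define t where "t = \<rho> * ((x (Suc i) - x u) + (x v - x (j - 1)))"
  have "0 \<le> x (Suc i) - x u" "x (Suc i) - x u \<le> x v - x u"
    "0 \<le> x v - x (j - 1)" "x v - x (j - 1) \<le> x v - x u"
    using ij uv x_mono[of u "Suc i"] x_mono[of "Suc i" v] x_mono[of u "j - 1"] x_mono[of "j - 1" v]
    by auto
  then have t: "0 \<le> t" "t \<le> x v - x u"
    using rho_pos rho_le unfolding t_def by (auto intro: order_trans[OF mult_right_mono[of \<rho> "1/2"]])
  have "min (i + 1) v = Suc i" "max (j - 1) u = j - 1" using ij by auto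
  then have "y j - y i \<le> x v - x u - t"
    using y_lower[of i] y_upper[of j] ij unfolding t_def by (simp add: algebra_simps)
  then have "(x v - x u) powr (s - 1) * (s * t - ((x i - x u) + (x v - x j)))
      \<le> (x v - x u - ((x i - x u) + (x v - x j))) powr s - (y j - y i) powr s"
    using t ij uv s_pos s_le x_mono[of u i] x_mono[of i j] x_mono[of j v] y_mono[of i j]
    by (intro powr_diff_ge_linear) auto
  then have "A ^ (j - i) * ((x v - x u) powr (s - 1) * (s * t - ((x i - x u) + (x v - x j))))
      \<le> gain i j"
    unfolding gain_def using A_pos by (intro mult_left_mono) auto
  then show ?thesis unfolding t_def by (simp add: algebra_simps)
qed

lemma gain_inner_row_ge:
  assumes i: "u \<le> i" "i \<le> v"
  shows "(x v - x u) powr (s - 1) *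
           ((\<Sum>j\<in>{i<..v}. A ^ (j - i)) * (\<rho> * s * (x (Suc i) - x u) - (x i - x u)))
         \<le> (\<Sum>j\<in>{i<..v}. gain i j)"
proof -
  note uv = pair_range
  define P where "P j = x v - x j" for j
  have P: "0 \<le> P j" if "i \<le> j" "j \<le> v" for j
    using that i uv x_mono[of j v] unfolding P_def by simp
  have "A ^ (i - i) * P i - A ^ (v - i) * P v \<le> (\<Sum>j\<in>{Suc i..v}. A ^ (j - i) * (\<rho> * s * P (j - 1) - P j))"
  proof (rule doubling_weighted_telescope_ge)
    fix j assume "i \<le> j" "j < v"
    then have "Suc j - i = Suc (j - i)" by simp
    then show "\<rho> * s * A ^ (Suc j - i) = 2 * A ^ (j - i)"
      using weight by (simp add: mult.assoc [symmetric])
  qed (use i P A_pos in auto)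
  moreover have "P v = 0" "{Suc i..v} = {i<..v}" unfolding P_def by auto
  ultimately have P_part: "0 \<le> (\<Sum>j\<in>{i<..v}. A ^ (j - i) * (\<rho> * s * P (j - 1) - P j))"
    using P[of i] i by simp
  define q where "q = \<rho> * s * (x (Suc i) - x u) - (x i - x u)"
  have "(\<Sum>j\<in>{i<..v}. (x v - x u) powr (s - 1) * (A ^ (j - i) * (q + (\<rho> * s * P (j - 1) - P j))))
        \<le> (\<Sum>j\<in>{i<..v}. gain i j)"
    by (rule sum_mono) (use gain_inner_pair_ge i in \<open>auto simp: P_def q_def\<close>)
  moreover have "(\<Sum>j\<in>{i<..v}. (x v - x u) powr (s - 1) * (A ^ (j - i) * (q + (\<rho> * s * P (j - 1) - P j))))
      = (x v - x u) powr (s - 1) * ((\<Sum>j\<in>{i<..v}. A ^ (j - i)) * q)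
        + (x v - x u) powr (s - 1) * (\<Sum>j\<in>{i<..v}. A ^ (j - i) * (\<rho> * s * P (j - 1) - P j))"
    by (simp add: distrib_left sum.distrib sum_distrib_left sum_distrib_right mult.assoc)
  moreover have "0 \<le> (x v - x u) powr (s - 1) * (\<Sum>j\<in>{i<..v}. A ^ (j - i) * (\<rho> * s * P (j - 1) - P j))"
    using P_part by simp
  ultimately show ?thesis unfolding q_def by linarith
qed

lemma gain_inner_ge: "(x v - x u) powr s \<le> (\<Sum>i\<in>{u..v}. \<Sum>j\<in>{i<..v}. gain i j)"
proof -
  note uv = pair_range
  define d where "d = x v - x u"
  define Q where "Q i = x i - x u" for i
  define W where "W i = (\<Sum>j\<in>{i<..v}. A ^ (j - i))" for i
  have Q: "0 \<le> Q i" if "u \<le> i" "i \<le> v" for i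
    using that uv x_mono[of u i] unfolding Q_def by simp
  have W_rec: "1 + W (Suc i) \<le> \<rho> * s * W i" if "u \<le> i" "i < v" for i
  proof -
    have "\<rho> * s * W i = 2 + 2 * W (Suc i)"
      using that power_tail_sum_unfold[of i v A] weight unfolding W_def by (simp add: algebra_simps)
    moreover have "0 \<le> W (Suc i)" unfolding W_def using A_pos by (intro sum_nonneg) simp
    ultimately show ?thesis by simp
  qed
  have "(\<Sum>i\<in>{u..<v}. Q (Suc i)) + W v * Q v - W u * Q u
          \<le> (\<Sum>i\<in>{u..<v}. W i * (\<rho> * s * Q (Suc i) - Q i))"
    using uv W_rec Q by (intro weighted_increment_sum_ge) auto
  moreover have "W v = 0" "Q u = 0" unfolding W_def Q_def by simp_all
  moreover have "Q (Suc (v - 1)) \<le> (\<Sum>i\<in>{u..<v}. Q (Suc i))"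
    by (rule member_le_sum [where f = "\<lambda>i. Q (Suc i)"]) (use uv Q in auto)
  moreover have "Suc (v - 1) = v" "Q v = d" using uv unfolding Q_def d_def by simp_all
  ultimately have "d \<le> (\<Sum>i\<in>{u..v}. W i * (\<rho> * s * Q (Suc i) - Q i))"
    using uv by (simp add: sum.last_plus)
  then have "d powr (s - 1) * d \<le> d powr (s - 1) * (\<Sum>i\<in>{u..v}. W i * (\<rho> * s * Q (Suc i) - Q i))"
    by (rule mult_left_mono) simp
  also have "\<dots> = (\<Sum>i\<in>{u..v}. d powr (s - 1) * (W i * (\<rho> * s * Q (Suc i) - Q i)))"
    by (simp add: sum_distrib_left)
  also have "\<dots> \<le> (\<Sum>i\<in>{u..v}. \<Sum>j\<in>{i<..v}. gain i j)"
    by (rule sum_mono) (use gain_inner_row_ge in \<open>auto simp: d_def W_def Q_def\<close>)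
  finally show ?thesis
    using uv x_mono[of u v] unfolding d_def by (simp add: powr_mult_base mult.commute)
qed

text \<open>Pairs with exactly one endpoint in \<open>[u, v]\<close> lose nothing in total, so the pairs inside
  \<open>[u, v]\<close> alone pay for the step.\<close>
lemma gain_total_ge: "(x v - x u) powr s \<le> (\<Sum>i\<in>{1..n}. \<Sum>j\<in>{i<..n}. gain i j)"
proof -
  note uv = pair_range
  define S where "S i = (\<Sum>j\<in>{i<..n}. gain i j)" for i
  have S_outside: "0 \<le> S i" if i: "i \<in> {1..n} - {u..v}" for i
  proof (cases "i < u")
    case True
    have "S i = (\<Sum>j\<in>{u..v}. gain i j)" unfolding S_def
      by (rule sum.mono_neutral_right) (use True uv i gain_fixed_pair in auto)
    then show ?thesis using gain_left_nonneg[of i] True i by simp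
  next
    case False
    then have "v < i" using i by auto
    then show ?thesis unfolding S_def using i gain_fixed_pair by (simp add: sum.neutral)
  qed
  have "S i = (\<Sum>j\<in>{i<..v}. gain i j) + (\<Sum>j\<in>{v<..n}. gain i j)" if "i \<in> {u..v}" for i
  proof -
    have "{i<..n} = {i<..v} \<union> {v<..n}" using that uv by auto
    then show ?thesis unfolding S_def by (simp add: sum.union_disjoint)
  qed
  then have "(\<Sum>i\<in>{u..v}. S i)
      = (\<Sum>i\<in>{u..v}. \<Sum>j\<in>{i<..v}. gain i j) + (\<Sum>j\<in>{v<..n}. \<Sum>i\<in>{u..v}. gain i j)"
    by (simp add: sum.distrib sum.swap [of _ "{u..v}"])
  moreover have "0 \<le> (\<Sum>j\<in>{v<..n}. \<Sum>i\<in>{u..v}. gain i j)"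
    by (rule sum_nonneg) (use gain_right_nonneg in auto)
  moreover have "(\<Sum>i\<in>{u..v}. S i) \<le> (\<Sum>i\<in>{1..n}. S i)"
    by (rule sum_mono2) (use S_outside uv in auto)
  ultimately show ?thesis using gain_inner_ge unfolding S_def by linarith
qed

lemma potential_decrease: "(x v - x u) powr s \<le> pair_potential A s n x - pair_potential A s n y"
  using gain_total_ge unfolding pair_potential_def gain_def
  by (simp add: sum_subtractf right_diff_distrib)

end

lemma pair_potential_bounds:
  assumes "0 < s" "0 \<le> A" "config n z"
  shows "0 \<le> pair_potential A s n z" "pair_potential A s n z \<le> (\<Sum>i\<in>{1..n}. \<Sum>j\<in>{i<..n}. A ^ (j - i))"
proof -
  show "0 \<le> pair_potential A s n z"
    unfolding pair_potential_def using assms by (intro sum_nonneg) auto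
  have "(z j - z i) powr s \<le> 1" if "i \<in> {1..n}" "j \<in> {i<..n}" for i j
  proof -
    have "0 \<le> z i" "z i \<le> z j" "z j \<le> 1" using assms(3) that unfolding config_def by auto
    then show ?thesis using assms(1) by (intro powr_le1) auto
  qed
  then show "pair_potential A s n z \<le> (\<Sum>i\<in>{1..n}. \<Sum>j\<in>{i<..n}. A ^ (j - i))"
    unfolding pair_potential_def using assms(2) by (intro sum_mono) (simp add: mult_left_le)
qed

lemma summable_le_of_potential:
  fixes f \<Phi> :: "nat \<Rightarrow> real"
  assumes f_nonneg: "\<And>t. 0 \<le> f t" and decrease: "\<And>t. f t \<le> \<Phi> t - \<Phi> (Suc t)"
    and \<Phi>_nonneg: "\<And>t. 0 \<le> \<Phi> t"
  shows "summable f" "(\<Sum>t. f t) \<le> \<Phi> 0"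
proof -
  have partial: "(\<Sum>t<T. f t) \<le> \<Phi> 0" for T
  proof -
    have "(\<Sum>t<T. f t) \<le> (\<Sum>t<T. \<Phi> t - \<Phi> (Suc t))" by (intro sum_mono decrease)
    also have "\<dots> = \<Phi> 0 - \<Phi> T" by (simp add: sum_lessThan_telescope')
    finally show ?thesis using \<Phi>_nonneg[of T] by linarith
  qed
  show "summable f" by (rule summableI_nonneg_bounded [OF f_nonneg partial])
  then show "(\<Sum>t. f t) \<le> \<Phi> 0" by (rule suminf_le_const [OF _ partial])
qed

lemma sum_power_greaterThan_atMost_le:
  fixes A :: real
  assumes A: "4 \<le> A" and "i \<le> m"
  shows "(\<Sum>j\<in>{i<..m}. A ^ (j - i)) \<le> 4/3 * A ^ (m - i)"
  using \<open>i \<le> m\<close>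
proof (induction m rule: dec_induct)
  case base
  then show ?case by simp
next
  case (step m)
  have "{i<..Suc m} = insert (Suc m) {i<..m}" using step.hyps by auto
  moreover have "Suc m - i = Suc (m - i)" using step.hyps by simp
  moreover have "4/3 * A ^ (m - i) \<le> 1/3 * (A * A ^ (m - i))"
    using A by (simp add: mult.assoc [symmetric] mult_right_mono)
  ultimately show ?case using step.IH by simp
qed

lemma sum_power_diff_atLeastLessThan_le:
  fixes A :: real
  assumes A: "4 \<le> A" and "i \<le> n"
  shows "(\<Sum>l\<in>{i..<n}. A ^ (n - l)) \<le> 4/3 * A ^ (n - i)"
  using \<open>i \<le> n\<close>
proof (induction i rule: inc_induct)
  case base
  then show ?case by simp
next
  case (step i)
  have "{i..<n} = insert i {Suc i..<n}" using step.hyps by auto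
  moreover have "n - i = Suc (n - Suc i)" using step.hyps by simp
  moreover have "4/3 * A ^ (n - Suc i) \<le> 1/3 * (A * A ^ (n - Suc i))"
    using A by (simp add: mult.assoc [symmetric] mult_right_mono)
  ultimately show ?case using step.IH by simp
qed

lemma pair_weight_sum_two: "(\<Sum>i\<in>{1..2::nat}. \<Sum>j\<in>{i<..2}. A ^ (j - i)) = (A :: real)"
proof -
  have "{1..2::nat} = {1, 2}" "{1<..2::nat} = {2}" "{2<..2::nat} = {}" by auto
  then show ?thesis by simp
qed

lemma pair_weight_sum_lt:
  fixes A :: real
  assumes A: "4 \<le> A" and n: "2 < n"
  shows "(\<Sum>i\<in>{1..n}. \<Sum>j\<in>{i<..n}. A ^ (j - i)) < 2 * A ^ (n - 1)"
proof -
  have "{1..n} = insert n {1..<n}" using n by auto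
  then have "(\<Sum>i\<in>{1..n}. \<Sum>j\<in>{i<..n}. A ^ (j - i)) = (\<Sum>i\<in>{1..<n}. \<Sum>j\<in>{i<..n}. A ^ (j - i))"
    by simp
  also have "\<dots> \<le> (\<Sum>i\<in>{1..<n}. 4/3 * A ^ (n - i))"
    by (rule sum_mono) (use sum_power_greaterThan_atMost_le A in auto)
  also have "\<dots> = 4/3 * (\<Sum>i\<in>{1..<n}. A ^ (n - i))" by (simp add: sum_distrib_left)
  also have "\<dots> \<le> 4/3 * (4/3 * A ^ (n - 1))"
    using sum_power_diff_atLeastLessThan_le[OF A, of 1 n] n by simp
  also have "\<dots> < 2 * A ^ (n - 1)" using A by simp
  finally show ?thesis .
qed

theorem mainTheorem4:
  fixes \<rho> s :: real and n :: nat
    and x :: "nat \<Rightarrow> nat \<Rightarrow> real" and u v :: "nat \<Rightarrow> nat"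
  assumes "0 < \<rho>" "\<rho> \<le> 1/2" "0 < s" "s \<le> 1" "n \<ge> 2"
    and "twist_system \<rho> n x u v"
  shows "summable (energy_term s x u v) \<and>
         (\<Sum>t. energy_term s x u v t) \<le> (\<Sum>i\<in>{1..n}. \<Sum>j\<in>{i<..n}. (2 / (\<rho> * s)) ^ (j - i)) \<and>
         (n = 2 \<longrightarrow> (\<Sum>t. energy_term s x u v t) \<le> 2 / (\<rho> * s)) \<and>
         (n > 2 \<longrightarrow> (\<Sum>t. energy_term s x u v t) < 2 * (2 / (\<rho> * s)) ^ (n - 1))"
proof -
  define A where "A = 2 / (\<rho> * s)"
  define \<Phi> where "\<Phi> t = pair_potential A s n (x t)" for t
  have "\<rho> * s \<le> 1/2" using assms mult_mono[of \<rho> "1/2" s 1] by simp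
  then have A: "4 \<le> A" "\<rho> * s * A = 2" using assms unfolding A_def by (simp_all add: field_simps)
  have decrease: "energy_term s x u v t \<le> \<Phi> t - \<Phi> (Suc t)" for t
  proof -
    interpret twist_transition \<rho> s A n "u t" "v t" "x t" "x (Suc t)"
      using assms A unfolding twist_system_def by unfold_locales auto
    show ?thesis using potential_decrease unfolding energy_term_def \<Phi>_def .
  qed
  have \<Phi>: "0 \<le> \<Phi> t" "\<Phi> t \<le> (\<Sum>i\<in>{1..n}. \<Sum>j\<in>{i<..n}. A ^ (j - i))" for t
    using pair_potential_bounds[of s A n "x t"] assms A unfolding twist_system_def \<Phi>_def by auto
  have "0 \<le> energy_term s x u v t" for t unfolding energy_term_def by simp
  note energy = summable_le_of_potential[where f = "energy_term s x u v" and \<Phi> = \<Phi>, OF this decrease \<Phi>(1)]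
  then have "(\<Sum>t. energy_term s x u v t) \<le> (\<Sum>i\<in>{1..n}. \<Sum>j\<in>{i<..n}. A ^ (j - i))"
    using \<Phi>(2)[of 0] by linarith
  then show ?thesis
    using energy(1) pair_weight_sum_two[of A] pair_weight_sum_lt[OF A(1), of n] unfolding A_def by auto
qed

end
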